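(* For every oriented forest $F$, $\mathrm{mad}_{\vec{\chi}}(F)=|V(F)|$.
   Context: An oriented forest is an orientation of an undirected forest. $\vec{\chi}(D)$ is the dichromatic number (least $k$ such that $V(D)$ partitions into $k$ sets inducing acyclic subdigraphs). A subdivision of $F$ is obtained by replacing each arc $(x,y)$ by a directed $(x,y)$-path, internally disjoint with new internal vertices. $\mathrm{mad}_{\vec{\chi}}(F)$ is the least integer $c$ such that every digraph $D$ with $\vec{\chi}(D)\ge c$ contains a subdivision of $F$ as a subdigraph. *)

theory Defs
  imports Main
begin

text \<open>A (finite) digraph: finite vertex set V, arc set A \<subseteq> V \<times> V, no loops.
  Digons (opposite arcs) are allowed, as usual for the dichromatic number.\<close>
definition digraph :: "'a set \<Rightarrow> ('a \<times> 'a) set \<Rightarrow> bool" where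
  "digraph V A \<longleftrightarrow> finite V \<and> A \<subseteq> V \<times> V \<and> (\<forall>x. (x, x) \<notin> A)"

definition dicolourable :: "'a set \<Rightarrow> ('a \<times> 'a) set \<Rightarrow> nat \<Rightarrow> bool" where
  "dicolourable V A k \<longleftrightarrow>
     (\<exists>f :: 'a \<Rightarrow> nat. (\<forall>v\<in>V. f v < k) \<and>
        (\<forall>i<k. acyclic (A \<inter> ({v\<in>V. f v = i} \<times> {v\<in>V. f v = i}))))"

definition dichromatic_number :: "'a set \<Rightarrow> ('a \<times> 'a) set \<Rightarrow> nat" where
  "dichromatic_number V A = (LEAST k. dicolourable V A k)"

definition uadj :: "('a \<times> 'a) set \<Rightarrow> 'a \<Rightarrow> 'a \<Rightarrow> bool" where
  "uadj A u v \<longleftrightarrow> (u, v) \<in> A \<or> (v, u) \<in> A"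

definition undirected_cycle :: "('a \<times> 'a) set \<Rightarrow> 'a list \<Rightarrow> bool" where
  "undirected_cycle A c \<longleftrightarrow> distinct c \<and> length c \<ge> 3 \<and>
     (\<forall>i<length c. uadj A (c ! i) (c ! ((i + 1) mod length c)))"

definition oriented_forest :: "'a set \<Rightarrow> ('a \<times> 'a) set \<Rightarrow> bool" where
  "oriented_forest V A \<longleftrightarrow> digraph V A \<and> (\<forall>x y. (x, y) \<in> A \<longrightarrow> (y, x) \<notin> A) \<and>
     \<not> (\<exists>c. undirected_cycle A c)"

definition dipath :: "'a set \<Rightarrow> ('a \<times> 'a) set \<Rightarrow> 'a list \<Rightarrow> bool" where
  "dipath V A p \<longleftrightarrow> length p \<ge> 2 \<and> distinct p \<and> set p \<subseteq> V \<and>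
     (\<forall>i. Suc i < length p \<longrightarrow> (p ! i, p ! Suc i) \<in> A)"

definition internal :: "'a list \<Rightarrow> 'a set" where
  "internal p = set (butlast (tl p))"

definition contains_subdivision ::
  "'b set \<Rightarrow> ('b \<times> 'b) set \<Rightarrow> 'a set \<Rightarrow> ('a \<times> 'a) set \<Rightarrow> bool" where
  "contains_subdivision VF AF V A \<longleftrightarrow>
     (\<exists>(phi :: 'b \<Rightarrow> 'a) (P :: 'b \<times> 'b \<Rightarrow> 'a list).
        inj_on phi VF \<and> phi ` VF \<subseteq> V \<and>
        (\<forall>e\<in>AF. dipath V A (P e) \<and> hd (P e) = phi (fst e) \<and> last (P e) = phi (snd e) \<and>
                 internal (P e) \<inter> phi ` VF = {}) \<and>
        (\<forall>e\<in>AF. \<forall>e'\<in>AF. e \<noteq> e' \<longrightarrow> internal (P e) \<inter> internal (P e') = {}))"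

text \<open>mad_chi(F): least c such that every (finite) digraph D with dichromatic number \<ge> c
  contains a subdivision of F. Digraphs are taken up to isomorphism, with vertices in nat.\<close>
definition mad_dichromatic :: "'b set \<Rightarrow> ('b \<times> 'b) set \<Rightarrow> nat" where
  "mad_dichromatic VF AF = (LEAST c. \<forall>(V :: nat set) A. digraph V A \<and> dichromatic_number V A \<ge> c
       \<longrightarrow> contains_subdivision VF AF V A)"

end

theory Submission
  imports Defs
begin

text \<open>If the dichromatic number of \<open>D\<close> is at least \<open>n = |V(F)|\<close>, then \<open>D\<close> is not
  \<open>(n - 1)\<close>-dicolourable, so it has a nonempty subdigraph of minimum in- and out-degree at least
  \<open>n - 1\<close>: otherwise repeatedly removing a vertex of small out- (or in-)degree yields a greedy
  dicolouring in which that vertex is a sink (or source) of its colour class. Into such a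
  subdigraph every oriented forest on \<open>n\<close> vertices embeds greedily, leaf by leaf, each leaf being
  sent to a fresh out- or in-neighbour of the image of its neighbour; an embedding is a subdivision
  whose paths are single arcs. Conversely, the complete digraph on \<open>n - 1\<close> vertices has
  dichromatic number \<open>n - 1\<close> and is too small to contain \<open>F\<close>.\<close>

lemma acyclic_if_acyclic_without_sink:
  assumes acyc: "acyclic (Restr R (- {v}))" and sink: "\<forall>y. (v, y) \<notin> R"
  shows "acyclic R"
proof -
  let ?S = "Restr R (- {v})"
  have avoid: "(a, b) \<in> R\<^sup>+ \<Longrightarrow> b \<noteq> v \<Longrightarrow> (a, b) \<in> ?S\<^sup>+" for a b
  proof (induction rule: trancl_induct)
    case (base y)
    then show ?case using sink by auto
  next
    case (step y z)
    then have "(y, z) \<in> ?S" using sink by blast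
    moreover from step.IH this have "(a, y) \<in> ?S\<^sup>+" by blast
    ultimately show ?case by (simp add: trancl_into_trancl2 trancl_into_trancl)
  qed
  show ?thesis
    unfolding acyclic_def
  proof
    fix x
    show "(x, x) \<notin> R\<^sup>+"
    proof
      assume cycle: "(x, x) \<in> R\<^sup>+"
      then have "x \<noteq> v" using sink by (meson tranclD)
      with acyc avoid[OF cycle] show False unfolding acyclic_def by blast
    qed
  qed
qed

lemma dicolourable_converse: "dicolourable V (A\<inverse>) k \<longleftrightarrow> dicolourable V A k"
proof -
  have "Restr (A\<inverse>) S = (Restr A S)\<inverse>" for S by auto
  then show ?thesis unfolding dicolourable_def by simp
qed

lemma dicolourable_extend_low_out_degree:
  assumes col: "dicolourable (V - {w}) A k" and "finite V" "(w, w) \<notin> A"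
    and low: "card {u\<in>V. (w, u) \<in> A} < k"
  shows "dicolourable V A k"
proof -
  obtain g where g_range: "\<forall>v\<in>V - {w}. g v < k"
    and g_acyclic: "\<forall>i<k. acyclic (Restr A {v\<in>V - {w}. g v = i})"
    using col unfolding dicolourable_def by blast
  have "card (g ` {u\<in>V. (w, u) \<in> A}) < card {..<k}"
    using low card_image_le[of "{u\<in>V. (w, u) \<in> A}" g] \<open>finite V\<close> by simp
  moreover have "finite (g ` {u\<in>V. (w, u) \<in> A})" using \<open>finite V\<close> by simp
  ultimately have "\<not> {..<k} \<subseteq> g ` {u\<in>V. (w, u) \<in> A}" by (meson card_mono not_le)
  then obtain c where "c < k" and c_free: "c \<notin> g ` {u\<in>V. (w, u) \<in> A}" by blast
  show ?thesis
    unfolding dicolourable_def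
  proof (intro exI[of _ "g(w := c)"] conjI ballI allI impI)
    fix v
    assume "v \<in> V"
    then show "(g(w := c)) v < k" using g_range \<open>c < k\<close> by auto
  next
    fix i
    assume "i < k"
    let ?C = "{v\<in>V. (g(w := c)) v = i}"
    have "?C - {w} = {v\<in>V - {w}. g v = i}" by auto
    then have "Restr (Restr A ?C) (- {w}) = Restr A {v\<in>V - {w}. g v = i}"
      by blast
    then have "acyclic (Restr (Restr A ?C) (- {w}))"
      using g_acyclic \<open>i < k\<close> by simp
    \<comment> \<open>no out-neighbour of \<open>w\<close> has colour \<open>c\<close>, so \<open>w\<close> is a sink of its colour class\<close>
    moreover have "\<forall>y. (w, y) \<notin> Restr A ?C"
      using c_free \<open>(w, w) \<notin> A\<close> by (auto simp: image_iff)
    ultimately show "acyclic (Restr A ?C)"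
      by (rule acyclic_if_acyclic_without_sink)
  qed
qed

lemma dicolourable_empty: "dicolourable {} A k"
  unfolding dicolourable_def by (simp add: acyclic_def)

definition min_semidegree_ge :: "('a \<times> 'a) set \<Rightarrow> 'a set \<Rightarrow> nat \<Rightarrow> bool" where
  "min_semidegree_ge A W k \<longleftrightarrow>
     (\<forall>w\<in>W. k \<le> card {u\<in>W. (w, u) \<in> A} \<and> k \<le> card {u\<in>W. (u, w) \<in> A})"

lemma min_semidegree_subdigraph_if_not_dicolourable:
  assumes "digraph V A" and "\<not> dicolourable V A k"
  obtains W where "W \<subseteq> V" "W \<noteq> {}" "min_semidegree_ge A W k"
proof -
  have "finite V" "\<forall>x. (x, x) \<notin> A" using assms(1) unfolding digraph_def by auto
  have "\<exists>W\<subseteq>V. W \<noteq> {} \<and> min_semidegree_ge A W k"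
    using \<open>finite V\<close> assms(2)
  proof (induction V rule: finite_psubset_induct)
    case (psubset V)
    show ?case
    proof (cases "min_semidegree_ge A V k")
      case True
      have "V \<noteq> {}"
      proof
        assume "V = {}"
        with psubset.prems show False by (simp add: dicolourable_empty)
      qed
      with True show ?thesis by blast
    next
      case False
      then obtain w where "w \<in> V"
        and low: "card {u\<in>V. (w, u) \<in> A} < k \<or> card {u\<in>V. (u, w) \<in> A} < k"
        unfolding min_semidegree_ge_def by (meson not_le)
      have "(w, w) \<notin> A" using \<open>\<forall>x. (x, x) \<notin> A\<close> by blast
      have "\<not> dicolourable (V - {w}) A k"
      proof
        assume col: "dicolourable (V - {w}) A k"
        from low show False
        proof
          assume "card {u\<in>V. (w, u) \<in> A} < k"
          with col psubset.hyps(1) \<open>(w, w) \<notin> A\<close> have "dicolourable V A k"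
            by (rule dicolourable_extend_low_out_degree)
          with psubset.prems show False ..
        next
          assume "card {u\<in>V. (u, w) \<in> A} < k"
          then have "card {u\<in>V. (w, u) \<in> A\<inverse>} < k" by simp
          moreover have "dicolourable (V - {w}) (A\<inverse>) k" using col by (simp only: dicolourable_converse)
          moreover have "(w, w) \<notin> A\<inverse>" using \<open>(w, w) \<notin> A\<close> by simp
          ultimately have "dicolourable V (A\<inverse>) k"
            using dicolourable_extend_low_out_degree[OF _ psubset.hyps(1)] by blast
          with psubset.prems show False by (simp only: dicolourable_converse)
        qed
      qed
      moreover have "V - {w} \<subset> V" using \<open>w \<in> V\<close> by blast
      ultimately obtain W where "W \<subseteq> V - {w}" "W \<noteq> {}" "min_semidegree_ge A W k"
        using psubset.IH[of "V - {w}"] by blast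
      then show ?thesis by blast
    qed
  qed
  with that show ?thesis by blast
qed

lemma uadj_commute: "uadj A u v \<longleftrightarrow> uadj A v u"
  unfolding uadj_def by blast

lemma undirected_cycle_mono: "A \<subseteq> B \<Longrightarrow> undirected_cycle A c \<Longrightarrow> undirected_cycle B c"
  unfolding undirected_cycle_def uadj_def by blast

lemma oriented_forest_remove_vertex:
  assumes "oriented_forest VF AF"
  shows "oriented_forest (VF - {l}) (Restr AF (VF - {l}))"
  using assms undirected_cycle_mono[of "Restr AF (VF - {l})" AF]
  unfolding oriented_forest_def digraph_def by blast

definition upath :: "'a set \<Rightarrow> ('a \<times> 'a) set \<Rightarrow> 'a list \<Rightarrow> bool" where
  "upath VF AF p \<longleftrightarrow> p \<noteq> [] \<and> distinct p \<and> set p \<subseteq> VF \<and>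
     (\<forall>i. Suc i < length p \<longrightarrow> uadj AF (p ! i) (p ! Suc i))"

lemma upath_snoc:
  assumes "upath VF AF p" "y \<in> VF" "y \<notin> set p" "uadj AF (last p) y"
  shows "upath VF AF (p @ [y])"
  unfolding upath_def
proof (intro conjI allI impI)
  fix i
  assume i: "Suc i < length (p @ [y])"
  show "uadj AF ((p @ [y]) ! i) ((p @ [y]) ! Suc i)"
  proof (cases "Suc i < length p")
    case True
    then show ?thesis using assms(1) by (simp add: upath_def nth_append)
  next
    case False
    then have "i = length p - 1" using i by simp
    then show ?thesis using assms(1,4) by (simp add: upath_def nth_append last_conv_nth)
  qed
qed (use assms in \<open>auto simp: upath_def\<close>)

lemma upath_drop: "upath VF AF p \<Longrightarrow> j < length p \<Longrightarrow> upath VF AF (drop j p)"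
  unfolding upath_def by (auto dest: in_set_dropD)

lemma undirected_cycle_if_closed_upath:
  assumes p: "upath VF AF p" and "3 \<le> length p" and closing: "uadj AF (last p) (hd p)"
  shows "undirected_cycle AF p"
  unfolding undirected_cycle_def
proof (intro conjI allI impI)
  fix i
  assume i: "i < length p"
  show "uadj AF (p ! i) (p ! ((i + 1) mod length p))"
  proof (cases "Suc i < length p")
    case True
    then show ?thesis using p by (simp add: upath_def)
  next
    case False
    then have "Suc i = length p" using i by simp
    then have "i = length p - 1" "(i + 1) mod length p = 0" by simp_all
    then show ?thesis using p closing by (simp add: upath_def last_conv_nth hd_conv_nth)
  qed
qed (use assms in \<open>auto simp: upath_def\<close>)

lemma upath_extend_or_cycle:
  assumes p: "upath VF AF p" and y: "y \<in> VF" "uadj AF (last p) y" "y \<noteq> last p"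
    and not_pred: "\<And>j. Suc (Suc j) = length p \<Longrightarrow> p ! j \<noteq> y"
  shows "upath VF AF (p @ [y]) \<or> (\<exists>c. undirected_cycle AF c)"
proof (cases "y \<in> set p")
  case False
  then show ?thesis using upath_snoc[OF p y(1) False y(2)] by blast
next
  case True
  then obtain j where j: "j < length p" "p ! j = y" by (auto simp: in_set_conv_nth)
  have "p ! (length p - 1) = last p" using p unfolding upath_def by (simp add: last_conv_nth)
  then have "j \<noteq> length p - 1" using j \<open>y \<noteq> last p\<close> by auto
  moreover have "Suc (Suc j) \<noteq> length p" using not_pred j(2) by blast
  ultimately have "j + 3 \<le> length p" using j(1) by linarith
  moreover have "uadj AF (last (drop j p)) (hd (drop j p))"
    using y(2) j uadj_commute by (simp add: hd_drop_conv_nth)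
  ultimately have "undirected_cycle AF (drop j p)"
    using undirected_cycle_if_closed_upath[OF upath_drop[OF p j(1)]] by simp
  then show ?thesis by blast
qed

lemma oriented_forest_has_leaf:
  assumes forest: "oriented_forest VF AF" and "VF \<noteq> {}"
  obtains l where "l \<in> VF" "\<And>u w. uadj AF l u \<Longrightarrow> uadj AF l w \<Longrightarrow> u = w"
proof (rule ccontr)
  assume no_leaf: "\<not> thesis"
  have "finite VF" "AF \<subseteq> VF \<times> VF" "\<forall>x. (x, x) \<notin> AF" "\<nexists>c. undirected_cycle AF c"
    using forest unfolding oriented_forest_def digraph_def by auto
  obtain v where "v \<in> VF" using \<open>VF \<noteq> {}\<close> by blast
  then have "upath VF AF [v]" by (simp add: upath_def)
  moreover have "\<forall>q. upath VF AF q \<longrightarrow> length q < Suc (card VF)"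
    unfolding upath_def using \<open>finite VF\<close> by (metis card_mono distinct_card less_Suc_eq_le)
  ultimately obtain p where p: "upath VF AF p"
    and longest: "\<And>q. upath VF AF q \<Longrightarrow> length q \<le> length p"
    using ex_has_greatest_nat[of "upath VF AF" "[v]" length] by blast
  have "last p \<in> VF" using p unfolding upath_def by auto
  then have "\<exists>u w. uadj AF (last p) u \<and> uadj AF (last p) w \<and> u \<noteq> w"
    using no_leaf that by blast
  then obtain u w where "uadj AF (last p) u" "uadj AF (last p) w" "u \<noteq> w" by blast
  \<comment> \<open>at least one of the two neighbours is not the predecessor of \<open>last p\<close> on \<open>p\<close>\<close>
  have "\<exists>y. uadj AF (last p) y \<and> (\<forall>j. Suc (Suc j) = length p \<longrightarrow> p ! j \<noteq> y)"
  proof (cases "\<exists>j. Suc (Suc j) = length p \<and> p ! j = u")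
    case True
    then obtain j0 where "length p = Suc (Suc j0)" "p ! j0 = u" by metis
    then have "\<forall>j. Suc (Suc j) = length p \<longrightarrow> p ! j \<noteq> w" using \<open>u \<noteq> w\<close> by auto
    then show ?thesis using \<open>uadj AF (last p) w\<close> by blast
  next
    case False
    then show ?thesis using \<open>uadj AF (last p) u\<close> by blast
  qed
  then obtain y where y: "uadj AF (last p) y" and "\<And>j. Suc (Suc j) = length p \<Longrightarrow> p ! j \<noteq> y"
    by blast
  moreover have "y \<in> VF" "y \<noteq> last p"
    using y \<open>AF \<subseteq> VF \<times> VF\<close> \<open>\<forall>x. (x, x) \<notin> AF\<close> unfolding uadj_def by auto
  ultimately have "upath VF AF (p @ [y])"
    using upath_extend_or_cycle[OF p] \<open>\<nexists>c. undirected_cycle AF c\<close> by blast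
  then show False using longest[of "p @ [y]"] by simp
qed

definition embeds :: "'b set \<Rightarrow> ('b \<times> 'b) set \<Rightarrow> 'a set \<Rightarrow> ('a \<times> 'a) set \<Rightarrow> ('b \<Rightarrow> 'a) \<Rightarrow> bool" where
  "embeds VF AF W A phi \<longleftrightarrow> inj_on phi VF \<and> phi ` VF \<subseteq> W \<and> (\<forall>(x, y)\<in>AF. (phi x, phi y) \<in> A)"

lemma embeds_fun_upd:
  assumes "embeds (VF - {l}) (Restr AF (VF - {l})) W A phi" "AF \<subseteq> VF \<times> VF"
    and "z \<in> W" "z \<notin> phi ` (VF - {l})"
    and "\<And>x y. (x, y) \<in> AF \<Longrightarrow> x = l \<or> y = l \<Longrightarrow> ((phi(l := z)) x, (phi(l := z)) y) \<in> A"
  shows "embeds VF AF W A (phi(l := z))"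
proof -
  have "inj_on (phi(l := z)) (VF - {l})"
    using assms(1,4) by (simp add: embeds_def inj_on_fun_updI)
  moreover have "(phi(l := z)) ` (VF - {l}) = phi ` (VF - {l})" by auto
  ultimately have "inj_on (phi(l := z)) (insert l (VF - {l}))"
    using assms(4) by (subst inj_on_insert) auto
  then have "inj_on (phi(l := z)) VF" by (rule inj_on_subset) blast
  moreover have "(phi(l := z)) ` VF \<subseteq> W" using assms(1,3) by (auto simp: embeds_def)
  moreover have "((phi(l := z)) x, (phi(l := z)) y) \<in> A" if "(x, y) \<in> AF" for x y
  proof (cases "x = l \<or> y = l")
    case True
    then show ?thesis using assms(5) that by blast
  next
    case False
    then have "(x, y) \<in> Restr AF (VF - {l})" using that assms(2) by auto
    then show ?thesis using assms(1) False by (auto simp: embeds_def)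
  qed
  ultimately show ?thesis unfolding embeds_def by blast
qed

lemma ex_notin_if_card_less:
  assumes "finite X" "card X < card S"
  shows "\<exists>z\<in>S. z \<notin> X"
  using assms card_mono[of X S] by (meson not_le subsetI)

lemma embeds_converse: "embeds VF (AF\<inverse>) W (A\<inverse>) phi \<longleftrightarrow> embeds VF AF W A phi"
  unfolding embeds_def by auto

lemma min_semidegree_ge_converse: "min_semidegree_ge (A\<inverse>) W k \<longleftrightarrow> min_semidegree_ge A W k"
  unfolding min_semidegree_ge_def by auto

lemma card_ge_if_min_semidegree:
  assumes "finite W" "w \<in> W" "\<forall>x. (x, x) \<notin> A" "min_semidegree_ge A W k"
  shows "Suc k \<le> card W"
proof -
  have "k \<le> card {u\<in>W. (w, u) \<in> A}" using assms(2,4) by (simp add: min_semidegree_ge_def)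
  also have "\<dots> \<le> card (W - {w})" using assms(1,3) by (intro card_mono) auto
  finally show ?thesis using card_Diff1_less[OF assms(1,2)] by linarith
qed

lemma embeds_extend_isolated:
  assumes phi: "embeds (VF - {l}) (Restr AF (VF - {l})) W A phi"
    and "AF \<subseteq> VF \<times> VF" "finite VF" "l \<in> VF" "\<forall>(x, y)\<in>AF. x \<noteq> l \<and> y \<noteq> l"
    and "card VF \<le> Suc k" "finite W" "w \<in> W" "\<forall>x. (x, x) \<notin> A" "min_semidegree_ge A W k"
  shows "\<exists>psi. embeds VF AF W A psi"
proof -
  have "card (phi ` (VF - {l})) \<le> card (VF - {l})" by (rule card_image_le) (use assms(3) in simp)
  also have "\<dots> < card VF" using assms(3,4) by (rule card_Diff1_less)
  also have "\<dots> \<le> card W"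
    using card_ge_if_min_semidegree[OF assms(7-10)] \<open>card VF \<le> Suc k\<close> by linarith
  finally obtain z where "z \<in> W" "z \<notin> phi ` (VF - {l})"
    using ex_notin_if_card_less[of "phi ` (VF - {l})" W] assms(3) by auto
  then have "embeds VF AF W A (phi(l := z))"
    using assms(5) by (intro embeds_fun_upd[OF phi assms(2)]) auto
  then show ?thesis by blast
qed

lemma embeds_extend_pendant:
  assumes phi: "embeds (VF - {l}) (Restr AF (VF - {l})) W A phi"
    and "AF \<subseteq> VF \<times> VF" "finite VF" "l \<in> VF" "u \<in> VF - {l}"
    and arcs_at_l: "\<And>x y. (x, y) \<in> AF \<Longrightarrow> x = l \<or> y = l \<Longrightarrow> (x, y) = (u, l)"
    and "card VF \<le> Suc k" "finite W" "\<forall>x. (x, x) \<notin> A" "min_semidegree_ge A W k"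
  shows "\<exists>psi. embeds VF AF W A psi"
proof -
  let ?X = "phi ` (VF - {l} - {u})"
  have "card ?X \<le> card (VF - {l} - {u})" by (rule card_image_le) (use assms(3) in simp)
  moreover have "card (VF - {l} - {u}) < card (VF - {l})" using assms(3,5) by (intro card_Diff1_less) auto
  moreover have "card (VF - {l}) < card VF" using assms(3,4) by (rule card_Diff1_less)
  ultimately have "card ?X < k" using \<open>card VF \<le> Suc k\<close> by linarith
  moreover have "phi u \<in> W" using phi \<open>u \<in> VF - {l}\<close> by (auto simp: embeds_def)
  then have "k \<le> card {z\<in>W. (phi u, z) \<in> A}"
    using \<open>min_semidegree_ge A W k\<close> unfolding min_semidegree_ge_def by blast
  ultimately obtain z where "z \<in> W" "(phi u, z) \<in> A" "z \<notin> ?X"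
    using ex_notin_if_card_less[of ?X "{z\<in>W. (phi u, z) \<in> A}"] assms(3) by auto
  moreover have "z \<noteq> phi u" using \<open>(phi u, z) \<in> A\<close> \<open>\<forall>x. (x, x) \<notin> A\<close> by auto
  then have "z \<notin> phi ` (VF - {l})" using \<open>z \<notin> ?X\<close> \<open>u \<in> VF - {l}\<close> by blast
  moreover have "((phi(l := z)) x, (phi(l := z)) y) \<in> A" if "(x, y) \<in> AF" "x = l \<or> y = l" for x y
    using arcs_at_l[OF that] \<open>u \<in> VF - {l}\<close> \<open>(phi u, z) \<in> A\<close> by auto
  ultimately have "embeds VF AF W A (phi(l := z))"
    by (intro embeds_fun_upd[OF phi assms(2)])
  then show ?thesis by blast
qed

lemma embeds_extend_leaf:
  assumes forest: "oriented_forest VF AF" and "l \<in> VF"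
    and leaf: "\<And>u w. uadj AF l u \<Longrightarrow> uadj AF l w \<Longrightarrow> u = w"
    and "card VF \<le> Suc k"
    and W: "finite W" "W \<noteq> {}" "\<forall>x. (x, x) \<notin> A" "min_semidegree_ge A W k"
    and phi: "embeds (VF - {l}) (Restr AF (VF - {l})) W A phi"
  shows "\<exists>psi. embeds VF AF W A psi"
proof -
  have "finite VF" "AF \<subseteq> VF \<times> VF" "\<forall>x. (x, x) \<notin> AF" and asym: "\<forall>x y. (x, y) \<in> AF \<longrightarrow> (y, x) \<notin> AF"
    using forest unfolding oriented_forest_def digraph_def by auto
  show ?thesis
  proof (cases "\<exists>u. uadj AF l u")
    case False
    then have "\<forall>(x, y)\<in>AF. x \<noteq> l \<and> y \<noteq> l" by (auto simp: uadj_def)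
    moreover obtain w where "w \<in> W" using W(2) by blast
    ultimately show ?thesis
      using embeds_extend_isolated[OF phi \<open>AF \<subseteq> VF \<times> VF\<close> \<open>finite VF\<close> \<open>l \<in> VF\<close>]
        \<open>card VF \<le> Suc k\<close> W(1,3,4) by blast
  next
    case True
    then obtain u where u: "uadj AF l u" by blast
    then have "u \<in> VF - {l}"
      using \<open>AF \<subseteq> VF \<times> VF\<close> \<open>\<forall>x. (x, x) \<notin> AF\<close> unfolding uadj_def by auto
    have only_u: "\<And>x. uadj AF l x \<Longrightarrow> x = u" using leaf u by blast
    show ?thesis
    proof (cases "(u, l) \<in> AF")
      case True
      then have "(x, y) = (u, l)" if "(x, y) \<in> AF" "x = l \<or> y = l" for x y
        using that only_u[of x] only_u[of y] asym unfolding uadj_def by auto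
      then show ?thesis
        using embeds_extend_pendant[OF phi \<open>AF \<subseteq> VF \<times> VF\<close> \<open>finite VF\<close> \<open>l \<in> VF\<close> \<open>u \<in> VF - {l}\<close>]
          \<open>card VF \<le> Suc k\<close> W(1,3,4) by blast
    next
      case False
      \<comment> \<open>the arc at \<open>l\<close> points away from \<open>l\<close>: reverse all arcs and use the previous case\<close>
      then have "(x, y) = (u, l)" if "(x, y) \<in> AF\<inverse>" "x = l \<or> y = l" for x y
        using that only_u[of x] only_u[of y] u unfolding uadj_def by auto
      moreover have "Restr (AF\<inverse>) (VF - {l}) = (Restr AF (VF - {l}))\<inverse>" by auto
      then have "embeds (VF - {l}) (Restr (AF\<inverse>) (VF - {l})) W (A\<inverse>) phi"
        using phi by (simp only: embeds_converse)
      moreover have "AF\<inverse> \<subseteq> VF \<times> VF" "\<forall>x. (x, x) \<notin> A\<inverse>" "min_semidegree_ge (A\<inverse>) W k"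
        using \<open>AF \<subseteq> VF \<times> VF\<close> W(3,4) by (auto simp: min_semidegree_ge_converse)
      ultimately obtain psi where "embeds VF (AF\<inverse>) W (A\<inverse>) psi"
        using embeds_extend_pendant[of VF l "AF\<inverse>" W "A\<inverse>" phi u k] \<open>finite VF\<close> \<open>l \<in> VF\<close>
          \<open>u \<in> VF - {l}\<close> \<open>card VF \<le> Suc k\<close> W(1) by blast
      then show ?thesis by (auto simp: embeds_converse)
    qed
  qed
qed

lemma embeds_oriented_forest_if_min_semidegree:
  assumes "oriented_forest VF AF" "card VF \<le> Suc k"
    and W: "finite W" "W \<noteq> {}" "\<forall>x. (x, x) \<notin> A" "min_semidegree_ge A W k"
  shows "\<exists>phi. embeds VF AF W A phi"
proof -
  have "finite VF" using assms(1) by (simp add: oriented_forest_def digraph_def)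
  then show ?thesis
    using assms(1,2)
  proof (induction VF arbitrary: AF rule: finite_psubset_induct)
    case (psubset VF AF)
    show ?case
    proof (cases "VF = {}")
      case True
      then have "AF = {}" using psubset.prems(1) by (auto simp: oriented_forest_def digraph_def)
      with True show ?thesis by (simp add: embeds_def)
    next
      case False
      obtain l where "l \<in> VF" and leaf: "\<And>u w. uadj AF l u \<Longrightarrow> uadj AF l w \<Longrightarrow> u = w"
        using oriented_forest_has_leaf[OF psubset.prems(1) False] by blast
      have "VF - {l} \<subset> VF" using \<open>l \<in> VF\<close> by blast
      moreover have "oriented_forest (VF - {l}) (Restr AF (VF - {l}))"
        using psubset.prems(1) by (rule oriented_forest_remove_vertex)
      moreover have "card (VF - {l}) \<le> Suc k" using psubset.prems(2) \<open>l \<in> VF\<close> psubset.hyps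
        by (simp add: card_Diff_singleton)
      ultimately obtain phi where "embeds (VF - {l}) (Restr AF (VF - {l})) W A phi"
        using psubset.IH[of "VF - {l}" "Restr AF (VF - {l})"] by blast
      then show ?thesis
        using embeds_extend_leaf[OF psubset.prems(1) \<open>l \<in> VF\<close> leaf psubset.prems(2) W] by blast
    qed
  qed
qed

lemma contains_subdivision_if_embeds:
  assumes "embeds VF AF V A phi" "AF \<subseteq> VF \<times> VF" "\<forall>x. (x, x) \<notin> AF"
  shows "contains_subdivision VF AF V A"
  unfolding contains_subdivision_def
proof (intro exI[of _ phi] exI[of _ "\<lambda>(x, y). [phi x, phi y]"] conjI ballI impI)
  show "inj_on phi VF" "phi ` VF \<subseteq> V" using assms(1) by (simp_all add: embeds_def)
next
  fix e
  assume "e \<in> AF"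
  then obtain x y where e: "e = (x, y)" "x \<in> VF" "y \<in> VF" "x \<noteq> y" using assms(2,3) by fast
  then have "phi x \<noteq> phi y" "(phi x, phi y) \<in> A" "phi x \<in> V" "phi y \<in> V"
    using assms(1) \<open>e \<in> AF\<close> by (auto simp: embeds_def inj_on_def)
  then show "dipath V A ((\<lambda>(x, y). [phi x, phi y]) e)"
    unfolding e(1) dipath_def by (auto simp: less_Suc_eq)
  show "hd ((\<lambda>(x, y). [phi x, phi y]) e) = phi (fst e)"
    "last ((\<lambda>(x, y). [phi x, phi y]) e) = phi (snd e)"
    "internal ((\<lambda>(x, y). [phi x, phi y]) e) \<inter> phi ` VF = {}"
    by (simp_all add: e(1) internal_def)
next
  fix e e'
  show "internal ((\<lambda>(x, y). [phi x, phi y]) e) \<inter> internal ((\<lambda>(x, y). [phi x, phi y]) e') = {}"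
    by (simp add: internal_def split: prod.split)
qed

lemma not_dicolourable_if_less_dichromatic_number:
  "k < dichromatic_number V A \<Longrightarrow> \<not> dicolourable V A k"
  unfolding dichromatic_number_def by (rule not_less_Least)

lemma contains_subdivision_if_dichromatic_number_ge:
  assumes forest: "oriented_forest VF AF" and "digraph V A" and "card VF \<le> dichromatic_number V A"
  shows "contains_subdivision VF AF V A"
proof -
  have "finite VF" "AF \<subseteq> VF \<times> VF" "\<forall>x. (x, x) \<notin> AF"
    using forest by (auto simp: oriented_forest_def digraph_def)
  have "\<exists>phi. embeds VF AF V A phi"
  proof (cases "VF = {}")
    case True
    then show ?thesis using \<open>AF \<subseteq> VF \<times> VF\<close> by (simp add: embeds_def)
  next
    case False
    then have "0 < card VF" using \<open>finite VF\<close> by (simp add: card_gt_0_iff)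
    then have "card VF - 1 < dichromatic_number V A" using assms(3) by linarith
    then have "\<not> dicolourable V A (card VF - 1)" by (rule not_dicolourable_if_less_dichromatic_number)
    with \<open>digraph V A\<close> obtain W where "W \<subseteq> V" "W \<noteq> {}" "min_semidegree_ge A W (card VF - 1)"
      by (rule min_semidegree_subdigraph_if_not_dicolourable)
    moreover have "finite W" "\<forall>x. (x, x) \<notin> A"
      using \<open>W \<subseteq> V\<close> \<open>digraph V A\<close> by (auto simp: digraph_def intro: finite_subset)
    moreover have "card VF \<le> Suc (card VF - 1)" by linarith
    ultimately obtain phi where "embeds VF AF W A phi"
      using embeds_oriented_forest_if_min_semidegree[OF forest] by blast
    then show ?thesis using \<open>W \<subseteq> V\<close> by (auto simp: embeds_def)
  qed
  then obtain phi where "embeds VF AF V A phi" by blast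
  then show ?thesis
    using \<open>AF \<subseteq> VF \<times> VF\<close> \<open>\<forall>x. (x, x) \<notin> AF\<close> by (rule contains_subdivision_if_embeds)
qed

lemma card_le_if_contains_subdivision:
  "contains_subdivision VF AF V A \<Longrightarrow> finite V \<Longrightarrow> card VF \<le> card V"
  unfolding contains_subdivision_def by (auto intro: card_inj_on_le)

definition complete_digraph :: "'a set \<Rightarrow> ('a \<times> 'a) set" where
  "complete_digraph V = {(x, y). x \<in> V \<and> y \<in> V \<and> x \<noteq> y}"

lemma digraph_complete_digraph: "finite V \<Longrightarrow> digraph V (complete_digraph V)"
  unfolding digraph_def complete_digraph_def by auto

lemma dicolourable_card:
  assumes "digraph V A"
  shows "dicolourable V A (card V)"
proof -
  have "finite V" "\<forall>x. (x, x) \<notin> A" using assms by (auto simp: digraph_def)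
  obtain f and n :: nat where f: "f ` V = {i. i < n}" "inj_on f V"
    using finite_imp_inj_to_nat_seg[OF \<open>finite V\<close>] by blast
  then have "n = card V" by (metis card_Collect_less_nat card_image)
  \<comment> \<open>every colour class of an injective colouring is a single vertex, which spans no arc\<close>
  have "A \<inter> {v\<in>V. f v = i} \<times> {v\<in>V. f v = i} = {}" for i
    using f(2) \<open>\<forall>x. (x, x) \<notin> A\<close> by (auto simp: inj_on_def)
  moreover have "\<forall>v\<in>V. f v < card V" using f(1) \<open>n = card V\<close> by blast
  ultimately show ?thesis
    unfolding dicolourable_def by (intro exI[of _ f]) (simp add: acyclic_def)
qed

lemma not_dicolourable_complete_digraph:
  assumes "finite V" "k < card V"
  shows "\<not> dicolourable V (complete_digraph V) k"
proof
  assume "dicolourable V (complete_digraph V) k"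
  then obtain f where f_range: "\<forall>v\<in>V. f v < k"
    and f_acyclic: "\<forall>i<k. acyclic (Restr (complete_digraph V) {v\<in>V. f v = i})"
    unfolding dicolourable_def by blast
  have "card (f ` V) \<le> card {..<k}" using f_range by (intro card_mono) auto
  then have "\<not> inj_on f V" using assms(2) card_image by fastforce
  then obtain x y where xy: "x \<in> V" "y \<in> V" "x \<noteq> y" "f x = f y" unfolding inj_on_def by blast
  \<comment> \<open>two vertices of the same colour form a digon\<close>
  let ?R = "Restr (complete_digraph V) {v\<in>V. f v = f x}"
  have "(x, y) \<in> ?R" "(y, x) \<in> ?R" using xy by (auto simp: complete_digraph_def)
  then have "(x, x) \<in> ?R\<^sup>+" by (meson r_into_trancl trancl_into_trancl)
  moreover have "acyclic ?R" using f_acyclic f_range xy(1) by blast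
  ultimately show False unfolding acyclic_def by blast
qed

lemma dichromatic_number_complete_digraph:
  assumes "finite V"
  shows "dichromatic_number V (complete_digraph V) = card V"
  unfolding dichromatic_number_def
proof (rule Least_equality)
  show "dicolourable V (complete_digraph V) (card V)"
    using assms by (intro dicolourable_card digraph_complete_digraph)
  show "card V \<le> k" if "dicolourable V (complete_digraph V) k" for k
    using that not_dicolourable_complete_digraph[OF assms, of k] by (meson not_le)
qed

theorem corollary35:
  fixes VF :: "'b set" and AF :: "('b \<times> 'b) set"
  assumes "oriented_forest VF AF"
  shows "mad_dichromatic VF AF = card VF"
  unfolding mad_dichromatic_def
proof (rule Least_equality)
  show "\<forall>(V :: nat set) A. digraph V A \<and> card VF \<le> dichromatic_number V A
      \<longrightarrow> contains_subdivision VF AF V A"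
    using contains_subdivision_if_dichromatic_number_ge[OF assms] by blast
next
  fix c
  assume forces: "\<forall>(V :: nat set) A. digraph V A \<and> c \<le> dichromatic_number V A
      \<longrightarrow> contains_subdivision VF AF V A"
  show "card VF \<le> c"
  proof (rule ccontr)
    assume "\<not> card VF \<le> c"
    define K :: "nat set" where "K = {..<card VF - 1}"
    have "finite K" "card K = card VF - 1" by (simp_all add: K_def)
    moreover have "digraph K (complete_digraph K)" using \<open>finite K\<close> by (rule digraph_complete_digraph)
    ultimately have "contains_subdivision VF AF K (complete_digraph K)"
      using forces dichromatic_number_complete_digraph[OF \<open>finite K\<close>] \<open>\<not> card VF \<le> c\<close> by simp
    then have "card VF \<le> card K" using \<open>finite K\<close> by (rule card_le_if_contains_subdivision)
    with \<open>card K = card VF - 1\<close> \<open>\<not> card VF \<le> c\<close> show False by linarith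
  qed
qed

end
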